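(* Let $\Gamma\in\mathcal S$ have $n$ vertices and let $\varphi$ be an embedding into $\mathbb Z^n$ such that exactly one index $t$ is of type (6), exactly one index is of type (5), and every other index is of type (4) or (7). Then $\Gamma\in\mathcal G$ (in particular $\Gamma$ is a linear chain), and the two vertices $v$ with nonzero coefficient at $E_t$ in $\varphi(v)$ are the two end vertices of the chain.
   Context: A plumbing tree is a finite tree $\Gamma$ each of whose vertices $v$ carries an integer decoration $d(v)$. $\Gamma$ is minimal if no vertex has decoration $-1$. For $n\ge 1$ let $(\mathbb Z^n,Q_n)$ be the lattice with basis $E_1,\dots,E_n$ and $Q_n(E_i,E_j)=-\delta_{ij}$, and let $K=\sum_{i=1}^n E_i$. A plumbing tree $\Gamma$ on $n$ vertices is a symplectic plumbing tree if there is a map $\varphi$ (an embedding) from its vertex set to $\mathbb Z^n$ such that: for distinct vertices $v_1,v_2$, $Q_n(\varphi(v_1),\varphi(v_2))$ is $1$ if they are adjacent and $0$ otherwise; $Q_n(\varphi(v),\varphi(v))=d(v)$ for every $v$; and $Q_n(\varphi(v),K)+Q_n(\varphi(v),\varphi(v))=-2$ for every $v$. $\mathcal S$ is the set of minimal, connected symplectic plumbing trees. Index types: write $\varphi(v)=\sum_i a_{v,i}E_i$; for an index $i$ consider the multiset of nonzero coefficients $a_{v,i}$ as $v$ ranges over all vertices. Index $i$ is of type (1) if this multiset is $\{1\}$, (2) if $\{-1\}$, (3) if $\{-2\}$, (4) if $\{1,-1\}$, (5) if $\{1,-2\}$, (6) if $\{-1,-1\}$, (7) if $\{1,-1,-1\}$,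 (9) if $\{1,-1,-1,-1\}$, and (10) if it is empty. (G) For coprime integers $p>q>0$ write $p^2/(pq-1)=a_1-\cfrac{1}{a_2-\cfrac{1}{\ddots-\cfrac{1}{a_k}}}$ with all $a_i\ge 2$ integers; $\Gamma_{p/q}$ is the linear chain with decorations $-a_1,\dots,-a_k$ in order, and $\mathcal G$ is the set of all $\Gamma_{p/q}$. *)

theory Defs
  imports Complex_Main "HOL-Library.Multiset"
begin

text \<open>A plumbing graph: finite vertex set V, symmetric irreflexive adjacency E on V,
  integer decoration d.  Vectors of Z^n are functions nat => int supported on {0..<n}.\<close>

definition graph :: "'v set \<Rightarrow> ('v \<Rightarrow> 'v \<Rightarrow> bool) \<Rightarrow> bool" where
  "graph V E \<longleftrightarrow> finite V \<and> (\<forall>u v. E u v \<longrightarrow> u \<in> V \<and> v \<in> V)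
      \<and> (\<forall>u v. E u v \<longrightarrow> E v u) \<and> (\<forall>v. \<not> E v v)"

definition connected_graph :: "'v set \<Rightarrow> ('v \<Rightarrow> 'v \<Rightarrow> bool) \<Rightarrow> bool" where
  "connected_graph V E \<longleftrightarrow> V \<noteq> {} \<and> (\<forall>u\<in>V. \<forall>v\<in>V. E\<^sup>*\<^sup>* u v)"

definition has_cycle :: "'v set \<Rightarrow> ('v \<Rightarrow> 'v \<Rightarrow> bool) \<Rightarrow> bool" where
  "has_cycle V E \<longleftrightarrow> (\<exists>cs. length cs \<ge> 3 \<and> distinct cs \<and> set cs \<subseteq> V
      \<and> (\<forall>i. Suc i < length cs \<longrightarrow> E (cs ! i) (cs ! Suc i)) \<and> E (last cs) (hd cs))"

definition is_tree :: "'v set \<Rightarrow> ('v \<Rightarrow> 'v \<Rightarrow> bool) \<Rightarrow> bool" where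
  "is_tree V E \<longleftrightarrow> graph V E \<and> connected_graph V E \<and> \<not> has_cycle V E"

definition minimal_plumbing :: "'v set \<Rightarrow> ('v \<Rightarrow> int) \<Rightarrow> bool" where
  "minimal_plumbing V d \<longleftrightarrow> (\<forall>v\<in>V. d v \<noteq> -1)"

definition Qn :: "nat \<Rightarrow> (nat \<Rightarrow> int) \<Rightarrow> (nat \<Rightarrow> int) \<Rightarrow> int" where
  "Qn n x y = - (\<Sum>i<n. x i * y i)"

definition Kn :: "nat \<Rightarrow> nat \<Rightarrow> int" where
  "Kn n = (\<lambda>i. if i < n then 1 else 0)"

definition symplectic_embedding ::
  "nat \<Rightarrow> 'v set \<Rightarrow> ('v \<Rightarrow> 'v \<Rightarrow> bool) \<Rightarrow> ('v \<Rightarrow> int) \<Rightarrow> ('v \<Rightarrow> nat \<Rightarrow> int) \<Rightarrow> bool" where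
  "symplectic_embedding n V E d \<phi> \<longleftrightarrow>
     (\<forall>v\<in>V. \<forall>i\<ge>n. \<phi> v i = 0)
   \<and> (\<forall>v1\<in>V. \<forall>v2\<in>V. v1 \<noteq> v2 \<longrightarrow> Qn n (\<phi> v1) (\<phi> v2) = (if E v1 v2 then 1 else 0))
   \<and> (\<forall>v\<in>V. Qn n (\<phi> v) (\<phi> v) = d v)
   \<and> (\<forall>v\<in>V. Qn n (\<phi> v) (Kn n) + Qn n (\<phi> v) (\<phi> v) = -2)"

definition coeffs_at :: "'v set \<Rightarrow> ('v \<Rightarrow> nat \<Rightarrow> int) \<Rightarrow> nat \<Rightarrow> int multiset" where
  "coeffs_at V \<phi> i = image_mset (\<lambda>v. \<phi> v i) (filter_mset (\<lambda>v. \<phi> v i \<noteq> 0) (mset_set V))"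

definition type4 where "type4 V \<phi> i \<longleftrightarrow> coeffs_at V \<phi> i = {#1, -1#}"
definition type5 where "type5 V \<phi> i \<longleftrightarrow> coeffs_at V \<phi> i = {#1, -2#}"
definition type6 where "type6 V \<phi> i \<longleftrightarrow> coeffs_at V \<phi> i = {#-1, -1#}"
definition type7 where "type7 V \<phi> i \<longleftrightarrow> coeffs_at V \<phi> i = {#1, -1, -1#}"

fun cf_val :: "int list \<Rightarrow> rat" where
  "cf_val [] = 0"
| "cf_val [a] = of_int a"
| "cf_val (a # as) = of_int a - 1 / cf_val as"

definition is_chain_with ::
  "'v set \<Rightarrow> ('v \<Rightarrow> 'v \<Rightarrow> bool) \<Rightarrow> ('v \<Rightarrow> int) \<Rightarrow> 'v list \<Rightarrow> int list \<Rightarrow> bool" where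
  "is_chain_with V E d vs as \<longleftrightarrow> distinct vs \<and> set vs = V \<and> length vs = length as
     \<and> (\<forall>i<length vs. \<forall>j<length vs. E (vs ! i) (vs ! j) \<longleftrightarrow> (i = Suc j \<or> j = Suc i))
     \<and> (\<forall>i<length vs. d (vs ! i) = - (as ! i))"

definition is_Gamma_pq ::
  "int \<Rightarrow> int \<Rightarrow> 'v set \<Rightarrow> ('v \<Rightarrow> 'v \<Rightarrow> bool) \<Rightarrow> ('v \<Rightarrow> int) \<Rightarrow> 'v list \<Rightarrow> bool" where
  "is_Gamma_pq p q V E d vs \<longleftrightarrow> (\<exists>as. as \<noteq> [] \<and> (\<forall>a\<in>set as. a \<ge> 2)
      \<and> cf_val as = of_int (p^2) / of_int (p*q - 1) \<and> is_chain_with V E d vs as)"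

definition in_G :: "'v set \<Rightarrow> ('v \<Rightarrow> 'v \<Rightarrow> bool) \<Rightarrow> ('v \<Rightarrow> int) \<Rightarrow> bool" where
  "in_G V E d \<longleftrightarrow> (\<exists>p q vs. 0 < q \<and> q < p \<and> coprime p q \<and> is_Gamma_pq p q V E d vs)"

end

theory Submission
  imports Defs
begin

(* Induction on the number of vertices.  Every vertex has exactly one coefficient in {1, -2}
   and all others in {0, -1}.  With at least three vertices, a cut argument produces a vertex w
   with coefficient 0 at the type (5) index s and no -1 outside the type (6) index t; minimality
   then forces phi(w) = E_x - E_t, and w turns out to be a leaf whose column x is of type (7).
   Deleting w and the index t leaves an embedding of the same kind with x in the role of t, so
   by induction the remaining vertices form a chain Gamma_{p/q} whose ends are the two vertices
   meeting E_x.  Attaching the (-2)-vertex w at one end and lowering the weight of the other end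
   by one gives Gamma_{(2p-q)/p}, whose ends are exactly the two vertices meeting E_t.  The base
   case is the chain (-2, -5) = Gamma_{3/2}.  Continued fractions are handled through products
   of 2x2 matrices. *)

section \<open>Hirzebruch--Jung continued fractions\<close>

type_synonym mat2 = "int \<times> int \<times> int \<times> int"

fun mat2_mult :: "mat2 \<Rightarrow> mat2 \<Rightarrow> mat2" where
  "mat2_mult (a, b, c, d) (e, f, g, h) = (a*e + b*g, a*f + b*h, c*e + d*g, c*f + d*h)"

definition mat2_one :: mat2 where
  "mat2_one = (1, 0, 0, 1)"

fun hj_matrix :: "int list \<Rightarrow> mat2" where
  "hj_matrix [] = mat2_one"
| "hj_matrix (a # as) = mat2_mult (a, -1, 1, 0) (hj_matrix as)"

text \<open>\<open>mat2_twist M\<close> is \<open>J M\<^sup>T J\<close> with \<open>J = diag(1,-1)\<close>: it is an anti-automorphism fixing every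
  factor of \<^const>\<open>hj_matrix\<close>, so it computes the matrix of the reversed list.\<close>

fun mat2_twist :: "mat2 \<Rightarrow> mat2" where
  "mat2_twist (a, b, c, d) = (a, -c, -b, d)"

text \<open>The Hirzebruch--Jung matrix of \<open>p\<^sup>2/(pq-1)\<close>; its first column is \<open>(p\<^sup>2, pq-1)\<close>.\<close>

definition gamma_matrix :: "int \<Rightarrow> int \<Rightarrow> mat2" where
  "gamma_matrix p q = (p\<^sup>2, -(p*(p-q) - 1), p*q - 1, -(q*(p-q) - 1))"

lemma mat2_mult_assoc: "mat2_mult (mat2_mult A B) C = mat2_mult A (mat2_mult B C)"
  by (cases A; cases B; cases C) (simp add: algebra_simps)

lemma mat2_mult_one [simp]: "mat2_mult mat2_one A = A" "mat2_mult A mat2_one = A"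
  by (cases A; simp add: mat2_one_def)+

lemma hj_matrix_append: "hj_matrix (xs @ ys) = mat2_mult (hj_matrix xs) (hj_matrix ys)"
  by (induction xs) (simp_all add: mat2_mult_assoc)

lemma mat2_twist_mult: "mat2_twist (mat2_mult A B) = mat2_mult (mat2_twist B) (mat2_twist A)"
  by (cases A; cases B) (simp add: algebra_simps)

lemma hj_matrix_rev: "hj_matrix (rev xs) = mat2_twist (hj_matrix xs)"
proof (induction xs)
  case Nil
  then show ?case by (simp add: mat2_one_def)
next
  case (Cons a xs)
  have "hj_matrix (rev (a # xs)) = mat2_mult (mat2_twist (hj_matrix xs)) (mat2_twist (a, -1, 1, 0))"
    using Cons by (simp add: hj_matrix_append)
  then show ?case by (simp add: mat2_twist_mult)
qed

lemma hj_matrix_increment_last: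
  "hj_matrix (xs @ [c + 1]) = mat2_mult (hj_matrix (xs @ [c])) (1, 0, -1, 1)"
  by (simp add: hj_matrix_append mat2_mult_assoc)

lemma cf_val_hj_matrix:
  assumes "xs \<noteq> []" "\<forall>a\<in>set xs. a \<ge> 2"
  obtains P b Q d where "hj_matrix xs = (P, b, Q, d)" "0 < Q" "Q < P" "cf_val xs = of_int P / of_int Q"
  using assms
proof (induction xs arbitrary: thesis rule: cf_val.induct)
  case 1
  then show ?case by simp
next
  case (2 a)
  then show ?case by (simp add: mat2_one_def)
next
  case (3 a b as)
  obtain P c Q d where IH: "hj_matrix (b # as) = (P, c, Q, d)" "0 < Q" "Q < P"
      "cf_val (b # as) = of_int P / of_int Q"
    by (rule "3.IH") (use "3.prems"(3) in auto)
  have "a \<ge> 2" using "3.prems"(3) by simp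
  then have "a * P - Q > P"
    using IH(2,3) mult_right_mono[of 2 a P] by linarith
  moreover have "cf_val (a # b # as) = of_int (a * P - Q) / of_int P"
  proof -
    have "cf_val (a # b # as) = of_int a - of_int Q / of_int P"
      using IH(4) by simp
    also have "\<dots> = of_int (a * P - Q) / of_int P"
      using IH(2,3) by (simp add: field_simps)
    finally show ?thesis .
  qed
  ultimately show ?case
    using "3.prems"(1) IH(1-3) by simp
qed

lemma gamma_matrix_twist: "mat2_twist (gamma_matrix p q) = gamma_matrix p (p - q)"
  by (simp add: gamma_matrix_def algebra_simps power2_eq_square)

text \<open>Prepending a \<open>-2\<close> vertex and increasing the last weight by one turns \<open>p/q\<close> into \<open>(2p-q)/p\<close>.\<close>

lemma gamma_matrix_extend:
  "mat2_mult (2, -1, 1, 0) (mat2_mult (gamma_matrix p q) (1, 0, -1, 1)) = gamma_matrix (2*p - q) p"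
  by (simp add: gamma_matrix_def algebra_simps power2_eq_square)

lemma hj_matrix_2_5: "hj_matrix [2, 5] = gamma_matrix 3 2"
  by (simp add: gamma_matrix_def mat2_one_def)

lemma coprime_mult_diff_right:
  fixes p q k :: int
  assumes "coprime p q"
  shows "coprime p (k * p - q)"
proof -
  have "gcd p (k * p + - q) = gcd p (- q)" by (rule gcd_add_mult)
  then show ?thesis using assms by (simp add: coprime_iff_gcd_eq_1)
qed

definition linear_chain :: "('v \<Rightarrow> 'v \<Rightarrow> bool) \<Rightarrow> 'v list \<Rightarrow> bool" where
  "linear_chain E vs \<longleftrightarrow>
     (\<forall>i<length vs. \<forall>j<length vs. E (vs ! i) (vs ! j) \<longleftrightarrow> i = Suc j \<or> j = Suc i)"

definition Gamma_chain ::
  "('v \<Rightarrow> 'v \<Rightarrow> bool) \<Rightarrow> ('v \<Rightarrow> int) \<Rightarrow> 'v list \<Rightarrow> int \<Rightarrow> int \<Rightarrow> bool" where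
  "Gamma_chain E a vs p q \<longleftrightarrow> distinct vs \<and> linear_chain E vs
     \<and> hj_matrix (map a vs) = gamma_matrix p q \<and> 0 < q \<and> q < p \<and> coprime p q"

lemma linear_chain_rev: "linear_chain E vs \<Longrightarrow> linear_chain E (rev vs)"
  unfolding linear_chain_def
proof (intro allI impI)
  fix i j
  assume chain: "\<forall>i<length vs. \<forall>j<length vs. E (vs ! i) (vs ! j) \<longleftrightarrow> i = Suc j \<or> j = Suc i"
    and ij: "i < length (rev vs)" "j < length (rev vs)"
  then show "E (rev vs ! i) (rev vs ! j) \<longleftrightarrow> i = Suc j \<or> j = Suc i"
    using chain[rule_format, of "length vs - Suc i" "length vs - Suc j"] by (auto simp: rev_nth)
qed

lemma linear_chain_Cons:
  assumes "linear_chain E' vs" "distinct vs" "w \<notin> set vs" "vs \<noteq> []"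
    and "\<And>z. E w z \<longleftrightarrow> z = hd vs" "\<And>z. E z w \<longleftrightarrow> z = hd vs"
    and "\<And>y z. y \<in> set vs \<Longrightarrow> z \<in> set vs \<Longrightarrow> E y z \<longleftrightarrow> E' y z"
  shows "linear_chain E (w # vs)"
  unfolding linear_chain_def
proof (intro allI impI)
  fix i j assume ij: "i < length (w # vs)" "j < length (w # vs)"
  have hd_index: "vs ! k = hd vs \<longleftrightarrow> k = 0" if "k < length vs" for k
    using assms(2,4) that by (simp add: hd_conv_nth nth_eq_iff_index_eq)
  have "\<not> E w w" using assms(3,4,5) by auto
  moreover have "E (vs ! i') (vs ! j') \<longleftrightarrow> i' = Suc j' \<or> j' = Suc i'"
    if "i' < length vs" "j' < length vs" for i' j'
    using assms(1,7) that unfolding linear_chain_def by simp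
  ultimately show "E ((w # vs) ! i) ((w # vs) ! j) \<longleftrightarrow> i = Suc j \<or> j = Suc i"
    using ij assms(5,6) hd_index by (cases i; cases j) auto
qed

lemma Gamma_chain_base:
  assumes "p \<noteq> q" "E p q" "E q p" "\<not> E p p" "\<not> E q q" "a p = 2" "a q = 5"
  shows "Gamma_chain E a [p, q] 3 2"
proof -
  have "linear_chain E [p, q]"
    using assms(2-5) unfolding linear_chain_def by (auto simp: less_Suc_eq)
  moreover have "coprime (3::int) 2"
    using coprime_add_one_left[of "2::int"] by simp
  ultimately show ?thesis
    using assms(1,6,7) hj_matrix_2_5 unfolding Gamma_chain_def by simp
qed

lemma Gamma_chain_rev:
  assumes "Gamma_chain E a vs p q"
  shows "Gamma_chain E a (rev vs) p (p - q)"
proof -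
  have "coprime p q" "linear_chain E vs" "hj_matrix (map a vs) = gamma_matrix p q"
    using assms unfolding Gamma_chain_def by auto
  moreover from \<open>coprime p q\<close> have "coprime p (p - q)"
    using coprime_mult_diff_right[of p q 1] by simp
  ultimately show ?thesis
    using assms linear_chain_rev[of E vs] unfolding Gamma_chain_def
    by (simp add: rev_map[symmetric] hj_matrix_rev gamma_matrix_twist)
qed

lemma Gamma_chain_orient:
  assumes "Gamma_chain E a vs p q" "{hd vs, last vs} = {x, y}" "x \<noteq> y"
  obtains vs' p' q' where "set vs' = set vs" "Gamma_chain E a vs' p' q'" "hd vs' = x" "last vs' = y"
proof -
  consider "hd vs = x" "last vs = y" | "hd vs = y" "last vs = x"
    using assms(2,3) by (metis doubleton_eq_iff)
  then show thesis
  proof cases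
    case 1
    then show thesis using that assms(1) by blast
  next
    case 2
    then show thesis
      using that[of "rev vs"] Gamma_chain_rev[OF assms(1)] by (simp add: hd_rev last_rev)
  qed
qed

lemma Gamma_chain_Cons:
  assumes chain: "Gamma_chain E' a' vs p q" and "vs \<noteq> []" "w \<notin> set vs"
    and "\<And>z. E w z \<longleftrightarrow> z = hd vs" "\<And>z. E z w \<longleftrightarrow> z = hd vs"
    and "\<And>y z. y \<in> set vs \<Longrightarrow> z \<in> set vs \<Longrightarrow> E y z \<longleftrightarrow> E' y z"
    and "a w = 2" "\<And>v. v \<in> set vs \<Longrightarrow> v \<noteq> last vs \<Longrightarrow> a v = a' v"
    and "a (last vs) = a' (last vs) + 1"
  shows "Gamma_chain E a (w # vs) (2*p - q) p"
proof -
  have dist: "distinct vs" and lin: "linear_chain E' vs" and pq: "0 < q" "q < p" "coprime p q"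
    and mat: "hj_matrix (map a' vs) = gamma_matrix p q"
    using chain unfolding Gamma_chain_def by auto
  obtain us l where vs: "vs = us @ [l]"
    using \<open>vs \<noteq> []\<close> by (metis append_butlast_last_id)
  then have "l \<notin> set us" using dist by simp
  then have "map a us = map a' us" using assms(8) vs by (intro map_cong) auto
  then have "hj_matrix (map a (w # vs)) = mat2_mult (2, -1, 1, 0) (hj_matrix (map a' us @ [a' l + 1]))"
    using assms(7,9) vs by (simp del: map_eq_conv)
  also have "\<dots> = mat2_mult (2, -1, 1, 0) (mat2_mult (gamma_matrix p q) (1, 0, -1, 1))"
    using mat vs by (simp add: hj_matrix_increment_last)
  also have "\<dots> = gamma_matrix (2*p - q) p" by (rule gamma_matrix_extend)
  finally show ?thesis
    using linear_chain_Cons[OF lin dist assms(3,2,4,5,6)] dist assms(3) pq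
      coprime_mult_diff_right[OF pq(3), of 2]
    unfolding Gamma_chain_def by (simp add: coprime_commute)
qed

lemma is_Gamma_pq_if_Gamma_chain:
  assumes "Gamma_chain E a vs p q" "set vs = V" "vs \<noteq> []"
    and "\<And>v. v \<in> V \<Longrightarrow> d v = - a v" "\<And>v. v \<in> V \<Longrightarrow> a v \<ge> 2"
  shows "is_Gamma_pq p q V E d vs"
proof -
  define as where "as = map a vs"
  have "as \<noteq> []" "\<forall>a\<in>set as. a \<ge> 2" using assms(2,3,5) unfolding as_def by auto
  moreover obtain b c where "hj_matrix as = (p\<^sup>2, b, p*q - 1, c)"
    using assms(1) unfolding Gamma_chain_def gamma_matrix_def as_def by simp
  ultimately have "cf_val as = of_int (p\<^sup>2) / of_int (p*q - 1)"
    by (metis cf_val_hj_matrix prod.inject)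
  moreover have "is_chain_with V E d vs as"
    using assms(1,2,4) unfolding is_chain_with_def Gamma_chain_def linear_chain_def as_def by auto
  ultimately show ?thesis
    unfolding is_Gamma_pq_def using \<open>as \<noteq> []\<close> \<open>\<forall>a\<in>set as. a \<ge> 2\<close> by blast
qed

lemma sum_le_member_nonpos:
  fixes f :: "'a \<Rightarrow> 'b::ordered_comm_monoid_add"
  assumes "finite A" "a \<in> A" "\<And>x. x \<in> A \<Longrightarrow> x \<noteq> a \<Longrightarrow> f x \<le> 0"
  shows "sum f A \<le> f a"
proof -
  have "sum f (A - {a}) \<le> 0" using assms(3) by (intro sum_nonpos) auto
  then have "f a + sum f (A - {a}) \<le> f a" using add_left_mono[of _ 0 "f a"] by simp
  then show ?thesis using assms(1,2) by (simp add: sum.remove)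
qed

lemma card_2_elem_obtain_other:
  assumes "card S = 2" "w \<in> S"
  obtains b where "S = {w, b}" "w \<noteq> b"
proof -
  obtain y z where "S = {y, z}" "y \<noteq> z" using assms(1) by (auto simp: card_2_iff)
  then show thesis using that assms(2) by (metis insert_commute insertE singletonD)
qed

lemma rtranclp_exits_set:
  assumes "R\<^sup>*\<^sup>* x y" "x \<in> S" "y \<notin> S"
  shows "\<exists>a b. a \<in> S \<and> b \<notin> S \<and> R a b"
  using assms by (induction rule: rtranclp_induct) auto

lemma rtranclp_avoid_leaf:
  assumes "R\<^sup>*\<^sup>* x y" "x \<noteq> w" "\<And>z. R w z \<longleftrightarrow> z = a" "\<And>z. R z w \<longleftrightarrow> z = a" "a \<noteq> w"
  shows "(\<lambda>u v. R u v \<and> u \<noteq> w \<and> v \<noteq> w)\<^sup>*\<^sup>* x (if y = w then a else y)"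
  using assms(1)
proof (induction rule: rtranclp_induct)
  case base
  then show ?case using assms(2) by simp
next
  case (step y z)
  show ?case
  proof (cases "y = w \<or> z = w")
    case True
    then show ?thesis using step assms(3-5) by auto
  next
    case False
    then show ?thesis using step by (auto intro: rtranclp.rtrancl_into_rtrancl)
  qed
qed

definition dot :: "nat set \<Rightarrow> (nat \<Rightarrow> int) \<Rightarrow> (nat \<Rightarrow> int) \<Rightarrow> int" where
  "dot I x y = (\<Sum>i\<in>I. x i * y i)"

lemma dot_commute: "dot I x y = dot I y x"
  unfolding dot_def by (simp add: mult.commute)

lemma dot_remove: "finite I \<Longrightarrow> i \<in> I \<Longrightarrow> dot I x y = dot (I - {i}) x y + x i * y i"
  unfolding dot_def by (simp add: sum.remove)

lemma dot_supported_two: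
  assumes "finite I" "a \<in> I" "b \<in> I" "a \<noteq> b" "\<And>i. i \<noteq> a \<Longrightarrow> i \<noteq> b \<Longrightarrow> x i = 0"
  shows "dot I x y = x a * y a + x b * y b"
proof -
  have "dot I x y = (\<Sum>i\<in>{a, b}. x i * y i)"
    unfolding dot_def using assms by (intro sum.mono_neutral_right) auto
  then show ?thesis using assms(4) by simp
qed

lemma sum_sum_dot:
  "(\<Sum>v\<in>A. \<Sum>z\<in>B. dot I (x v) (y z)) = dot I (\<lambda>i. \<Sum>v\<in>A. x v i) (\<lambda>i. \<Sum>z\<in>B. y z i)"
proof -
  have "(\<Sum>v\<in>A. \<Sum>z\<in>B. dot I (x v) (y z)) = (\<Sum>v\<in>A. \<Sum>i\<in>I. \<Sum>z\<in>B. x v i * y z i)"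
    unfolding dot_def by (intro sum.cong refl sum.swap)
  also have "\<dots> = (\<Sum>i\<in>I. \<Sum>v\<in>A. \<Sum>z\<in>B. x v i * y z i)"
    by (rule sum.swap)
  also have "\<dots> = dot I (\<lambda>i. \<Sum>v\<in>A. x v i) (\<lambda>i. \<Sum>z\<in>B. y z i)"
    unfolding dot_def by (simp add: sum_product)
  finally show ?thesis .
qed

lemma coeffs_at_conv:
  "finite V \<Longrightarrow> coeffs_at V \<phi> i = image_mset (\<lambda>v. \<phi> v i) (mset_set {v\<in>V. \<phi> v i \<noteq> 0})"
  by (simp add: coeffs_at_def filter_mset_mset_set)

lemma size_coeffs_at: "finite V \<Longrightarrow> size (coeffs_at V \<phi> i) = card {v\<in>V. \<phi> v i \<noteq> 0}"
  by (simp add: coeffs_at_conv)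

lemma count_coeffs_at:
  assumes "finite V" "c \<noteq> 0"
  shows "count (coeffs_at V \<phi> i) c = card {v\<in>V. \<phi> v i = c}"
proof -
  have "count (coeffs_at V \<phi> i) c = card {v\<in>{v\<in>V. \<phi> v i \<noteq> 0}. c = \<phi> v i}"
    using assms(1) by (simp add: coeffs_at_conv count_image_mset')
  also have "{v\<in>{v\<in>V. \<phi> v i \<noteq> 0}. c = \<phi> v i} = {v\<in>V. \<phi> v i = c}"
    using assms(2) by auto
  finally show ?thesis .
qed

lemma coeff_in_coeffs_at:
  assumes "finite V" "v \<in> V" "\<phi> v i \<noteq> 0"
  shows "\<phi> v i \<in># coeffs_at V \<phi> i"
proof -
  have "v \<in> {u\<in>V. \<phi> u i = \<phi> v i}" using assms(2) by simp
  then have "card {u\<in>V. \<phi> u i = \<phi> v i} > 0" using assms(1) by (auto simp: card_gt_0_iff)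
  then show ?thesis
    using count_coeffs_at[where \<phi> = \<phi> and i = i, OF assms(1,3)] by (metis count_greater_zero_iff)
qed

lemma coeffs_at_remove_zero:
  assumes "finite V" "\<phi> w i = 0" "\<And>v. v \<in> V \<Longrightarrow> v \<noteq> w \<Longrightarrow> \<psi> v i = \<phi> v i"
  shows "coeffs_at (V - {w}) \<psi> i = coeffs_at V \<phi> i"
proof -
  let ?S = "{v\<in>V. \<phi> v i \<noteq> 0}"
  have "{v\<in>V - {w}. \<psi> v i \<noteq> 0} = ?S" using assms(2,3) by force
  moreover have "image_mset (\<lambda>v. \<psi> v i) (mset_set ?S) = image_mset (\<lambda>v. \<phi> v i) (mset_set ?S)"
    using assms by (intro image_mset_cong) force
  ultimately show ?thesis using assms(1) by (simp add: coeffs_at_conv)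
qed

section \<open>Embeddings with one index of type (5) and one of type (6)\<close>

text \<open>Here \<^const>\<open>dot\<close> is \<open>-Q\<^sub>n\<close>, and \<open>adjunction\<close> is \<open>Q(v, K) + Q(v, v) = -2\<close> rewritten.\<close>

locale type56_embedding =
  fixes V :: "'v set" and E :: "'v \<Rightarrow> 'v \<Rightarrow> bool" and I :: "nat set"
    and \<phi> :: "'v \<Rightarrow> nat \<Rightarrow> int" and t s :: nat
  assumes finite_V: "finite V" and finite_I: "finite I"
    and support: "\<And>v i. v \<in> V \<Longrightarrow> i \<notin> I \<Longrightarrow> \<phi> v i = 0"
    and dot_distinct: "\<And>v w. v \<in> V \<Longrightarrow> w \<in> V \<Longrightarrow> v \<noteq> w \<Longrightarrow>
      dot I (\<phi> v) (\<phi> w) = (if E v w then -1 else 0)"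
    and adjunction: "\<And>v. v \<in> V \<Longrightarrow> (\<Sum>i\<in>I. \<phi> v i * (\<phi> v i + 1)) = 2"
    and dot_self_ne_1: "\<And>v. v \<in> V \<Longrightarrow> dot I (\<phi> v) (\<phi> v) \<noteq> 1"
    and E_in_V: "\<And>v w. E v w \<Longrightarrow> v \<in> V \<and> w \<in> V"
    and E_irrefl: "\<And>v. \<not> E v v"
    and connected: "\<And>v w. v \<in> V \<Longrightarrow> w \<in> V \<Longrightarrow> E\<^sup>*\<^sup>* v w"
    and t_in_I: "t \<in> I" and s_in_I: "s \<in> I"
    and type6_t: "type6 V \<phi> t" and type5_s: "type5 V \<phi> s"
    and type4_or_type7: "\<And>i. i \<in> I \<Longrightarrow> i \<noteq> t \<Longrightarrow> i \<noteq> s \<Longrightarrow> type4 V \<phi> i \<or> type7 V \<phi> i"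
begin

lemma E_sym:
  assumes "E v w"
  shows "E w v"
proof -
  have "v \<in> V" "w \<in> V" "v \<noteq> w" using assms E_in_V E_irrefl by auto
  then have "dot I (\<phi> w) (\<phi> v) = -1" using assms dot_distinct[of v w] by (simp add: dot_commute)
  then show ?thesis using dot_distinct[of w v] \<open>v \<noteq> w\<close> \<open>v \<in> V\<close> \<open>w \<in> V\<close> by (auto split: if_splits)
qed

lemma coeff_mem: "v \<in> V \<Longrightarrow> \<phi> v i \<noteq> 0 \<Longrightarrow> \<phi> v i \<in># coeffs_at V \<phi> i"
  by (rule coeff_in_coeffs_at[OF finite_V])

lemma card_coeff: "c \<noteq> 0 \<Longrightarrow> card {v\<in>V. \<phi> v i = c} = count (coeffs_at V \<phi> i) c"
  by (simp add: count_coeffs_at[OF finite_V])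

lemma coeff_t: "v \<in> V \<Longrightarrow> \<phi> v t = 0 \<or> \<phi> v t = -1"
  using coeff_mem[of v t] type6_t unfolding type6_def by auto

lemma card_minus_one_t: "card {v\<in>V. \<phi> v t = -1} = 2"
  using card_coeff[of "-1" t] type6_t unfolding type6_def by simp

lemma coeff_s: "v \<in> V \<Longrightarrow> \<phi> v s = 0 \<or> \<phi> v s = 1 \<or> \<phi> v s = -2"
  using coeff_mem[of v s] type5_s unfolding type5_def by auto

lemma card_nonzero_s: "card {v\<in>V. \<phi> v s \<noteq> 0} = 2"
  using size_coeffs_at[OF finite_V, of \<phi> s] type5_s unfolding type5_def by simp

lemma coeff_type47: "v \<in> V \<Longrightarrow> i \<in> I \<Longrightarrow> i \<noteq> t \<Longrightarrow> i \<noteq> s \<Longrightarrow> \<phi> v i = 0 \<or> \<phi> v i = 1 \<or> \<phi> v i = -1"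
  using coeff_mem[of v i] type4_or_type7[of i] unfolding type4_def type7_def by auto

lemma card_minus_one_type47:
  "i \<in> I \<Longrightarrow> i \<noteq> t \<Longrightarrow> i \<noteq> s \<Longrightarrow> card {v\<in>V. \<phi> v i = -1} \<le> 2"
  using card_coeff[of "-1" i] type4_or_type7[of i] unfolding type4_def type7_def by auto

lemma t_ne_s: "t \<noteq> s"
proof
  assume "t = s"
  then have "{#-1, -1#} = ({#1, -2#} :: int multiset)"
    using type6_t type5_s unfolding type6_def type5_def by simp
  then have "(1::int) \<in># {#-1, -1#}" by simp
  then show False by simp
qed

lemma unique_one: "i \<in> I \<Longrightarrow> i \<noteq> t \<Longrightarrow> \<exists>!v. v \<in> V \<and> \<phi> v i = 1"
proof -
  assume "i \<in> I" "i \<noteq> t"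
  then have "count (coeffs_at V \<phi> i) 1 = 1"
    using type5_s type4_or_type7[of i] unfolding type4_def type5_def type7_def
    by (cases "i = s") auto
  then have "card {v\<in>V. \<phi> v i = 1} = 1" using card_coeff[of 1 i] by simp
  then obtain w where "{v\<in>V. \<phi> v i = 1} = {w}" by (auto simp: card_1_singleton_iff)
  then show ?thesis by (metis (mono_tags, lifting) mem_Collect_eq singleton_iff)
qed

lemma coeff_values: "v \<in> V \<Longrightarrow> \<phi> v i = 0 \<or> \<phi> v i = 1 \<or> \<phi> v i = -1 \<or> \<phi> v i = -2"
  using coeff_t coeff_s coeff_type47 support by metis

lemma minus_two_imp_s: "v \<in> V \<Longrightarrow> \<phi> v i = -2 \<Longrightarrow> i = s"
  using coeff_t coeff_type47 support by force

text \<open>Every coefficient lies in \<open>{0, 1, -1, -2}\<close>, where \<open>c (c + 1)\<close> is \<open>2\<close> for \<open>c \<in> {1, -2}\<close> and \<open>0\<close>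
  otherwise; so the adjunction equation singles out exactly one such coefficient per vertex.\<close>

lemma special_index:
  assumes v: "v \<in> V"
  obtains x where "\<phi> v x = 1 \<or> \<phi> v x = -2" "\<And>i. i \<noteq> x \<Longrightarrow> \<phi> v i = 0 \<or> \<phi> v i = -1"
proof -
  let ?P = "\<lambda>i. \<phi> v i = 1 \<or> \<phi> v i = -2"
  have "\<phi> v i * (\<phi> v i + 1) = (if ?P i then 2 else 0)" for i
    using coeff_values[OF v, of i] by auto
  then have "2 = (\<Sum>i\<in>I. if ?P i then 2 else (0::int))"
    using adjunction[OF v] by simp
  also have "\<dots> = 2 * int (card {i\<in>I. ?P i})"
    using finite_I by (simp add: sum.If_cases Int_def conj_commute)
  finally obtain x where x: "{i\<in>I. ?P i} = {x}"
    by (auto simp: card_1_singleton_iff)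
  have "\<phi> v i = 0 \<or> \<phi> v i = -1" if "i \<noteq> x" for i
    using x that coeff_values[OF v, of i] support[OF v, of i] by auto
  then show thesis using that x by blast
qed

lemma special_index_unique:
  assumes "v \<in> V" "\<phi> v i = 1 \<or> \<phi> v i = -2" "\<phi> v j = 1 \<or> \<phi> v j = -2"
  shows "i = j"
proof -
  obtain x where "\<And>k. k \<noteq> x \<Longrightarrow> \<phi> v k = 0 \<or> \<phi> v k = -1"
    using special_index[OF assms(1)] by blast
  then have "i = x" "j = x" using assms(2,3) by force+
  then show ?thesis by simp
qed

lemma coeff_off_owner:
  assumes "i \<in> I" "i \<noteq> t" "i \<noteq> s" "u \<in> V" "\<phi> u i = 1" "v \<in> V" "v \<noteq> u"
  shows "\<phi> v i = 0 \<or> \<phi> v i = -1"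
  using coeff_type47[OF assms(6,1,2,3)] unique_one[OF assms(1,2)] assms(4-7) by blast

lemma owner_coeff_s:
  assumes "u \<in> V" "\<phi> u i = 1" "i \<noteq> s"
  shows "\<phi> u s = 0"
  using coeff_s[OF assms(1)] special_index_unique[OF assms(1), of i s] assms(2,3) by auto

lemma dot_self_ge_2: "v \<in> V \<Longrightarrow> dot I (\<phi> v) (\<phi> v) \<ge> 2"
proof -
  assume v: "v \<in> V"
  obtain x where x: "\<phi> v x = 1 \<or> \<phi> v x = -2" using special_index[OF v] by blast
  then have "x \<in> I" using support[OF v] by force
  then have "\<phi> v x * \<phi> v x \<le> dot I (\<phi> v) (\<phi> v)"
    unfolding dot_def using finite_I by (intro member_le_sum) auto
  then show ?thesis using x dot_self_ne_1[OF v] by auto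
qed

lemma card_V_ge_2: "card V \<ge> 2"
  using card_mono[OF finite_V, of "{v\<in>V. \<phi> v t = -1}"] card_minus_one_t by auto

section \<open>A leaf of the form \<open>E\<^sub>x - E\<^sub>t\<close>\<close>

lemma cut_dot_negative:
  assumes "S \<subseteq> V" "x \<in> S" "y \<in> V" "y \<notin> S"
  shows "(\<Sum>v\<in>S. \<Sum>z\<in>V - S. dot I (\<phi> v) (\<phi> z)) < 0"
proof -
  obtain a b where ab: "a \<in> S" "b \<notin> S" "E a b"
    using rtranclp_exits_set[OF connected[of x y]] assms by blast
  then have "b \<in> V - S" using E_in_V by blast
  have nonpos: "dot I (\<phi> v) (\<phi> z) \<le> 0" if "v \<in> S" "z \<in> V - S" for v z
  proof -
    have "v \<in> V" "v \<noteq> z" using that assms(1) by auto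
    then show ?thesis using dot_distinct[of v z] that by simp
  qed
  have "finite S" "finite (V - S)" using assms(1) finite_V finite_subset by auto
  then have "(\<Sum>v\<in>S. \<Sum>z\<in>V - S. dot I (\<phi> v) (\<phi> z)) \<le> (\<Sum>z\<in>V - S. dot I (\<phi> a) (\<phi> z))"
    using ab(1) nonpos by (intro sum_le_member_nonpos sum_nonpos) auto
  also have "\<dots> \<le> dot I (\<phi> a) (\<phi> b)"
    using \<open>finite (V - S)\<close> \<open>b \<in> V - S\<close> nonpos[OF ab(1)] by (intro sum_le_member_nonpos) auto
  also have "\<dots> = -1"
    using dot_distinct[of a b] ab assms(1) \<open>b \<in> V - S\<close> by auto
  finally show ?thesis by simp
qed

definition points_to :: "'v \<Rightarrow> 'v \<Rightarrow> bool" where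
  "points_to v z \<longleftrightarrow> (\<exists>i. i \<noteq> t \<and> \<phi> v i = -1 \<and> \<phi> z i = 1)"

definition points_to_closed :: "'v set \<Rightarrow> bool" where
  "points_to_closed S \<longleftrightarrow> S \<subseteq> V \<and> (\<forall>v\<in>S. \<phi> v s = 0) \<and> (\<forall>v\<in>S. \<forall>z\<in>V. points_to v z \<longrightarrow> z \<in> S)"

lemma column_sums_nonneg:
  assumes closed: "points_to_closed S" and pred: "\<And>z. z \<in> S \<Longrightarrow> \<exists>v\<in>S. points_to v z" and "i \<in> I"
  shows "(\<Sum>v\<in>S. \<phi> v i) * (\<Sum>z\<in>V - S. \<phi> z i) \<ge> 0"
proof -
  have S: "S \<subseteq> V" "finite S" and S_s: "\<And>v. v \<in> S \<Longrightarrow> \<phi> v s = 0"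
    and S_closed: "\<And>v z. v \<in> S \<Longrightarrow> z \<in> V \<Longrightarrow> points_to v z \<Longrightarrow> z \<in> S"
    using closed finite_V finite_subset unfolding points_to_closed_def by auto
  consider "i = s" | "i = t" | "i \<noteq> s" "i \<noteq> t" by blast
  then show ?thesis
  proof cases
    case 1
    then show ?thesis using S_s by simp
  next
    case 2
    have "\<phi> v t \<le> 0" if "v \<in> V" for v using coeff_t[OF that] by auto
    then have "(\<Sum>v\<in>S. \<phi> v i) \<le> 0" "(\<Sum>z\<in>V - S. \<phi> z i) \<le> 0"
      using 2 S(1) by (auto intro!: sum_nonpos)
    then show ?thesis by (simp add: mult_nonpos_nonpos)
  next
    case 3
    obtain u where u: "u \<in> V" "\<phi> u i = 1" using unique_one[OF \<open>i \<in> I\<close> 3(2)] by blast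
    note off = coeff_off_owner[OF \<open>i \<in> I\<close> 3(2,1) u]
    show ?thesis
    proof (cases "u \<in> S")
      case True
      obtain v j where v: "v \<in> S" "j \<noteq> t" "\<phi> v j = -1" "\<phi> u j = 1"
        using pred[OF True] unfolding points_to_def by blast
      have "j = i" using special_index_unique[OF u(1), of j i] v(4) u(2) by simp
      then have "v \<noteq> u" using v(3) u(2) by auto
      have "(\<Sum>x\<in>S - {u}. \<phi> x i) \<le> \<phi> v i"
        using S(1,2) v(1) \<open>v \<noteq> u\<close> off by (intro sum_le_member_nonpos) force+
      then have "(\<Sum>x\<in>S. \<phi> x i) \<le> 0"
        using S(2) True u(2) v(3) \<open>j = i\<close> by (simp add: sum.remove)
      moreover have "(\<Sum>z\<in>V - S. \<phi> z i) \<le> 0"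
        using off True by (intro sum_nonpos) force
      ultimately show ?thesis by (simp add: mult_nonpos_nonpos)
    next
      case False
      have "\<phi> v i = 0" if "v \<in> S" for v
      proof -
        have "\<phi> v i \<noteq> -1"
          using S_closed[OF that u(1)] False 3(2) u(2) unfolding points_to_def by blast
        then show ?thesis using off[of v] that S(1) False by auto
      qed
      then show ?thesis by simp
    qed
  qed
qed

lemma points_to_closed_cut_nonneg:
  assumes "points_to_closed S" "\<And>z. z \<in> S \<Longrightarrow> \<exists>v\<in>S. points_to v z"
  shows "(\<Sum>v\<in>S. \<Sum>z\<in>V - S. dot I (\<phi> v) (\<phi> z)) \<ge> 0"
proof -
  have "dot I (\<lambda>i. \<Sum>v\<in>S. \<phi> v i) (\<lambda>i. \<Sum>z\<in>V - S. \<phi> z i) \<ge> 0"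
    unfolding dot_def using column_sums_nonneg[OF assms] by (intro sum_nonneg) simp
  then show ?thesis by (simp only: sum_sum_dot)
qed

lemma minimal_points_to_closed_predecessor:
  assumes closed: "points_to_closed S" and "S \<noteq> {}"
    and minimal: "\<And>S'. points_to_closed S' \<Longrightarrow> S' \<noteq> {} \<Longrightarrow> card S \<le> card S'"
    and successor: "\<And>w. w \<in> S \<Longrightarrow> \<exists>z\<in>V. points_to w z"
    and "z \<in> S"
  shows "\<exists>v\<in>S. points_to v z"
proof (rule ccontr)
  assume no_pred: "\<not> (\<exists>v\<in>S. points_to v z)"
  have "finite S" "S \<subseteq> V" using closed finite_V finite_subset unfolding points_to_closed_def by auto
  obtain z' where z': "z' \<in> V" "points_to z z'" using successor[OF \<open>z \<in> S\<close>] by blast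
  then have "z' \<in> S" using closed \<open>z \<in> S\<close> unfolding points_to_closed_def by blast
  moreover have "z' \<noteq> z" using z'(2) unfolding points_to_def by auto
  moreover have "points_to_closed (S - {z})"
    unfolding points_to_closed_def
  proof (intro conjI ballI impI)
    fix v z'' assume "v \<in> S - {z}" "z'' \<in> V" "points_to v z''"
    then show "z'' \<in> S - {z}" using closed no_pred unfolding points_to_closed_def by auto
  qed (use closed in \<open>auto simp: points_to_closed_def\<close>)
  ultimately have "card S \<le> card (S - {z})" using minimal by blast
  then show False using card_Diff1_less[OF \<open>finite S\<close> \<open>z \<in> S\<close>] by simp
qed

text \<open>Otherwise every vertex with zero coefficient at \<open>s\<close> points to another such vertex, and a
  minimal non-empty set \<open>S\<close> of them closed under \<^const>\<open>points_to\<close> gives every element a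
  predecessor in \<open>S\<close>. Then each column sums over \<open>S\<close> and over its complement to numbers of
  the same sign, so the edges leaving \<open>S\<close> have total weight \<open>\<ge> 0\<close>; but \<open>S\<close> misses the vertex
  with coefficient \<open>1\<close> at \<open>s\<close>, and by connectivity some edge of weight \<open>-1\<close> leaves \<open>S\<close>.\<close>

lemma exists_sink:
  assumes "card V \<ge> 3"
  shows "\<exists>w\<in>V. \<phi> w s = 0 \<and> (\<forall>i. \<phi> w i = -1 \<longrightarrow> i = t)"
proof (rule ccontr)
  assume no_sink: "\<not> ?thesis"
  define C where "C = {w\<in>V. \<phi> w s = 0}"
  have successor: "\<exists>z\<in>V. points_to w z" if w: "w \<in> C" for w
  proof -
    obtain i where i: "\<phi> w i = -1" "i \<noteq> t" using no_sink w unfolding C_def by blast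
    have "i \<in> I" using support i(1) w unfolding C_def by force
    then obtain z where "z \<in> V" "\<phi> z i = 1" using unique_one[OF _ i(2)] by blast
    then show ?thesis unfolding points_to_def using i by blast
  qed
  have "points_to_closed C"
    unfolding points_to_closed_def
  proof (intro conjI ballI impI)
    fix v z assume "v \<in> C" "z \<in> V" "points_to v z"
    then obtain i where "\<phi> v i = -1" "\<phi> z i = 1" "\<phi> v s = 0"
      unfolding points_to_def C_def by auto
    then show "z \<in> C"
      using owner_coeff_s[OF \<open>z \<in> V\<close>, of i] \<open>z \<in> V\<close> unfolding C_def by (cases "i = s") auto
  qed (auto simp: C_def)
  moreover have "C \<noteq> {}"
  proof
    assume "C = {}"
    then have "V = {v\<in>V. \<phi> v s \<noteq> 0}" unfolding C_def by auto
    then show False using card_nonzero_s assms by simp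
  qed
  ultimately obtain S where S: "points_to_closed S" "S \<noteq> {}"
    and minimal: "\<And>S'. points_to_closed S' \<Longrightarrow> S' \<noteq> {} \<Longrightarrow> card S \<le> card S'"
    using ex_has_least_nat[of "\<lambda>S. points_to_closed S \<and> S \<noteq> {}" C card] by blast
  have "S \<subseteq> C" using S(1) unfolding points_to_closed_def C_def by auto
  then have "\<And>z. z \<in> S \<Longrightarrow> \<exists>v\<in>S. points_to v z"
    using minimal_points_to_closed_predecessor[OF S minimal] successor by blast
  then have "(\<Sum>v\<in>S. \<Sum>z\<in>V - S. dot I (\<phi> v) (\<phi> z)) \<ge> 0"
    by (rule points_to_closed_cut_nonneg[OF S(1)])
  moreover obtain p where "p \<in> V" "\<phi> p s = 1"
    using unique_one[OF s_in_I t_ne_s[symmetric]] by blast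
  moreover obtain x where "x \<in> S" using S(2) by blast
  ultimately show False
    using cut_dot_negative[of S x p] \<open>S \<subseteq> C\<close> unfolding C_def by fastforce
qed

lemma exists_leaf_vector:
  assumes "card V \<ge> 3"
  obtains w x where "w \<in> V" "x \<in> I" "x \<noteq> t" "x \<noteq> s"
    "\<phi> w x = 1" "\<phi> w t = -1" "\<forall>i. i \<noteq> x \<longrightarrow> i \<noteq> t \<longrightarrow> \<phi> w i = 0"
proof -
  obtain w where w: "w \<in> V" "\<phi> w s = 0" "\<And>i. \<phi> w i = -1 \<Longrightarrow> i = t"
    using exists_sink[OF assms] by blast
  obtain x where x: "\<phi> w x = 1 \<or> \<phi> w x = -2" "\<And>i. i \<noteq> x \<Longrightarrow> \<phi> w i = 0 \<or> \<phi> w i = -1"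
    using special_index[OF w(1)] by blast
  have "\<phi> w x = 1" using x(1) minus_two_imp_s[OF w(1), of x] w(2) by auto
  moreover have "x \<in> I" "x \<noteq> t" "x \<noteq> s"
    using \<open>\<phi> w x = 1\<close> support[OF w(1)] coeff_t[OF w(1)] w(2) by force+
  moreover have zero: "\<phi> w i = 0" if "i \<noteq> x" "i \<noteq> t" for i
    using x(2)[OF that(1)] w(3)[of i] that(2) by auto
  moreover have "\<phi> w t = -1"
  proof (rule ccontr)
    assume "\<phi> w t \<noteq> -1"
    then have "\<phi> w t = 0" using coeff_t[OF w(1)] by simp
    then have "dot I (\<phi> w) (\<phi> w) = 1"
      using dot_supported_two[OF finite_I \<open>x \<in> I\<close> t_in_I \<open>x \<noteq> t\<close> zero] \<open>\<phi> w x = 1\<close> by simp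
    then show False using dot_self_ne_1[OF w(1)] by simp
  qed
  ultimately show thesis using that w(1) by blast
qed

lemma leaf_structure:
  assumes w: "w \<in> V" "x \<in> I" "x \<noteq> t" "x \<noteq> s"
    "\<phi> w x = 1" "\<phi> w t = -1" "\<forall>i. i \<noteq> x \<longrightarrow> i \<noteq> t \<longrightarrow> \<phi> w i = 0"
  obtains a b where "a \<in> V" "b \<in> V" "w \<noteq> a" "w \<noteq> b" "a \<noteq> b"
    "{v\<in>V. \<phi> v t \<noteq> 0} = {w, b}" "{v\<in>V. \<phi> v x \<noteq> 0} = {w, a, b}" "\<phi> a x = -1" "\<phi> b x = -1"
    "\<forall>z. E w z \<longleftrightarrow> z = a"
proof -
  have dot_w: "dot I (\<phi> w) (\<phi> z) = \<phi> z x - \<phi> z t" for z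
    using dot_supported_two[OF finite_I w(2) t_in_I w(3) w(7)[rule_format]] w(5,6) by simp
  note off_w = coeff_off_owner[OF w(2,3,4,1,5)]
  have "card {v\<in>V. \<phi> v t = -1} = 2" "w \<in> {v\<in>V. \<phi> v t = -1}"
    using card_minus_one_t w(1,6) by auto
  then obtain b where b: "{v\<in>V. \<phi> v t = -1} = {w, b}" "w \<noteq> b"
    by (rule card_2_elem_obtain_other)
  then have "b \<in> V" by blast
  have col_t: "{v\<in>V. \<phi> v t \<noteq> 0} = {w, b}" using b(1) coeff_t by force
  have "\<phi> b x = -1" and not_Ewb: "\<not> E w b"
    using dot_distinct[OF w(1) \<open>b \<in> V\<close> b(2)] dot_w[of b] off_w[OF \<open>b \<in> V\<close>] b(1,2)
    by (auto split: if_splits)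
  have neighbour: "z \<in> V \<and> z \<noteq> b \<and> \<phi> z x = -1" if "E w z" for z
  proof -
    have "z \<in> V" "z \<noteq> w" "z \<noteq> b" using that E_in_V E_irrefl not_Ewb by blast+
    then have "\<phi> z t = 0" using col_t by blast
    then show ?thesis
      using dot_distinct[OF w(1) \<open>z \<in> V\<close>] dot_w[of z] that \<open>z \<noteq> w\<close> \<open>z \<in> V\<close> \<open>z \<noteq> b\<close> by auto
  qed
  obtain a where "E w a"
    using connected[OF w(1) \<open>b \<in> V\<close>] b(2) by (metis converse_rtranclpE)
  then have a: "a \<in> V" "a \<noteq> b" "\<phi> a x = -1" "w \<noteq> a"
    using neighbour E_irrefl by blast+
  have "{a, b} \<subseteq> {v\<in>V. \<phi> v x = -1}" using a \<open>b \<in> V\<close> \<open>\<phi> b x = -1\<close> by auto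
  moreover have "card {v\<in>V. \<phi> v x = -1} \<le> card {a, b}"
    using card_minus_one_type47[OF w(2,3,4)] a(2) by simp
  ultimately have col_x_minus: "{v\<in>V. \<phi> v x = -1} = {a, b}"
    using finite_V by (intro card_seteq[symmetric]) auto
  have "{v\<in>V. \<phi> v x \<noteq> 0} = {w, a, b}"
    using col_x_minus off_w w(1,5) a(3) \<open>\<phi> b x = -1\<close> by auto
  moreover have "E w z \<longleftrightarrow> z = a" for z
    using neighbour[of z] col_x_minus \<open>E w a\<close> by auto
  ultimately show thesis
    using that a \<open>b \<in> V\<close> b(2) col_t \<open>\<phi> b x = -1\<close> by blast
qed

lemma dot_drop_column:
  "dot (I - {t}) (\<lambda>i. if i = t then 0 else \<phi> v i) (\<lambda>i. if i = t then 0 else \<phi> z i)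
     = dot I (\<phi> v) (\<phi> z) - \<phi> v t * \<phi> z t"
proof -
  have "dot (I - {t}) (\<lambda>i. if i = t then 0 else \<phi> v i) (\<lambda>i. if i = t then 0 else \<phi> z i)
      = dot (I - {t}) (\<phi> v) (\<phi> z)"
    unfolding dot_def by (intro sum.cong) auto
  then show ?thesis using dot_remove[OF finite_I t_in_I] by simp
qed

lemma remove_leaf:
  assumes leaf: "w \<in> V" "a \<in> V" "b \<in> V" "w \<noteq> a" "w \<noteq> b" "a \<noteq> b" "x \<in> I" "x \<noteq> t" "x \<noteq> s"
    "\<phi> w x = 1" "\<forall>i. i \<noteq> x \<longrightarrow> i \<noteq> t \<longrightarrow> \<phi> w i = 0"
    "{v\<in>V. \<phi> v t \<noteq> 0} = {w, b}" "{v\<in>V. \<phi> v x \<noteq> 0} = {w, a, b}" "\<phi> a x = -1" "\<phi> b x = -1"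
    "\<forall>z. E w z \<longleftrightarrow> z = a"
  shows "type56_embedding (V - {w}) (\<lambda>u v. E u v \<and> u \<noteq> w \<and> v \<noteq> w) (I - {t})
    (\<lambda>v i. if i = t then 0 else \<phi> v i) x s"
proof
  let ?\<psi> = "\<lambda>v i. if i = t then 0 else \<phi> v i"
  have t_zero: "\<phi> v t = 0" if "v \<in> V" "v \<noteq> w" "v \<noteq> b" for v
    using leaf(12) that by blast
  show "dot (I - {t}) (?\<psi> v) (?\<psi> z) = (if E v z \<and> v \<noteq> w \<and> z \<noteq> w then -1 else 0)"
    if "v \<in> V - {w}" "z \<in> V - {w}" "v \<noteq> z" for v z
    using dot_drop_column[of v z] dot_distinct[of v z] t_zero[of v] t_zero[of z] that by auto
  show "(\<Sum>i\<in>I - {t}. ?\<psi> v i * (?\<psi> v i + 1)) = 2" if "v \<in> V - {w}" for v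
  proof -
    have "(\<Sum>i\<in>I - {t}. ?\<psi> v i * (?\<psi> v i + 1)) = (\<Sum>i\<in>I - {t}. \<phi> v i * (\<phi> v i + 1))"
      by (intro sum.cong) auto
    also have "\<dots> = (\<Sum>i\<in>I. \<phi> v i * (\<phi> v i + 1)) - \<phi> v t * (\<phi> v t + 1)"
      using finite_I t_in_I by (simp add: sum_diff1)
    finally show ?thesis using adjunction[of v] coeff_t[of v] that by auto
  qed
  show "dot (I - {t}) (?\<psi> v) (?\<psi> v) \<noteq> 1" if "v \<in> V - {w}" for v
  proof (cases "v = b")
    case True
    obtain j where j: "\<phi> b j = 1 \<or> \<phi> b j = -2" using special_index[OF leaf(3)] by blast
    then have "j \<noteq> x" "j \<noteq> t" "j \<in> I" using leaf(15) coeff_t[OF leaf(3)] support[OF leaf(3)] by force+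
    then have "(\<Sum>i\<in>{j, x}. ?\<psi> b i * ?\<psi> b i) \<le> dot (I - {t}) (?\<psi> b) (?\<psi> b)"
      unfolding dot_def using finite_I leaf(7,8) by (intro sum_mono2) auto
    then show ?thesis using True j \<open>j \<noteq> x\<close> \<open>j \<noteq> t\<close> leaf(8,15) by auto
  next
    case False
    then show ?thesis using dot_drop_column[of v v] dot_self_ne_1[of v] t_zero[of v] that by auto
  qed
  show "(\<lambda>u v. E u v \<and> u \<noteq> w \<and> v \<noteq> w)\<^sup>*\<^sup>* y z" if "y \<in> V - {w}" "z \<in> V - {w}" for y z
    using rtranclp_avoid_leaf[OF connected[of y z], of w a] leaf(4,16) E_sym that by (auto simp: eq_commute)
  show "type6 (V - {w}) ?\<psi> x"
  proof -
    have "{v\<in>V - {w}. ?\<psi> v x \<noteq> 0} = {a, b}" using leaf(4-6,8,13) by auto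
    then show ?thesis
      unfolding type6_def using finite_V leaf(6,8,14,15) by (simp add: coeffs_at_conv)
  qed
  have unchanged: "coeffs_at (V - {w}) ?\<psi> i = coeffs_at V \<phi> i" if "i \<noteq> x" "i \<noteq> t" for i
    using coeffs_at_remove_zero[where \<phi> = \<phi> and \<psi> = ?\<psi>, OF finite_V leaf(11)[rule_format, OF that]] that by simp
  show "type5 (V - {w}) ?\<psi> s"
    using type5_s unchanged[of s] leaf(9) t_ne_s unfolding type5_def by simp
  show "type4 (V - {w}) ?\<psi> i \<or> type7 (V - {w}) ?\<psi> i"
    if "i \<in> I - {t}" "i \<noteq> x" "i \<noteq> s" for i
    using type4_or_type7[of i] unchanged[of i] that unfolding type4_def type7_def by auto
qed (use finite_V finite_I support E_in_V E_irrefl leaf(7,8) s_in_I t_ne_s in auto)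

lemma Gamma_chain_attach_leaf:
  assumes leaf: "w \<in> V" "b \<in> V" "w \<noteq> b" "x \<in> I" "x \<noteq> t" "\<phi> w x = 1" "\<phi> w t = -1"
    "\<forall>i. i \<noteq> x \<longrightarrow> i \<noteq> t \<longrightarrow> \<phi> w i = 0" "{v\<in>V. \<phi> v t \<noteq> 0} = {w, b}" "\<forall>z. E w z \<longleftrightarrow> z = a"
    and chain: "Gamma_chain (\<lambda>u v. E u v \<and> u \<noteq> w \<and> v \<noteq> w)
      (\<lambda>v. dot (I - {t}) (\<lambda>i. if i = t then 0 else \<phi> v i) (\<lambda>i. if i = t then 0 else \<phi> v i)) vs p q"
    and vs: "set vs = V - {w}" "hd vs = a" "last vs = b"
  shows "Gamma_chain E (\<lambda>v. dot I (\<phi> v) (\<phi> v)) (w # vs) (2*p - q) p"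
proof -
  let ?\<psi> = "\<lambda>v i. if i = t then 0 else \<phi> v i"
  have "b \<in> set vs" using vs(1) leaf(2,3) by simp
  then have "vs \<noteq> []" by auto
  have "dot I (\<phi> w) (\<phi> w) = 2"
    using dot_supported_two[OF finite_I leaf(4) t_in_I leaf(5) leaf(8)[rule_format]] leaf(6,7) by simp
  moreover have "dot I (\<phi> v) (\<phi> v) = dot (I - {t}) (?\<psi> v) (?\<psi> v)" if "v \<in> V - {w}" "v \<noteq> b" for v
  proof -
    have "\<phi> v t = 0" using that leaf(9) by (auto simp: set_eq_iff)
    then show ?thesis using dot_drop_column[of v v] by simp
  qed
  moreover have "dot I (\<phi> b) (\<phi> b) = dot (I - {t}) (?\<psi> b) (?\<psi> b) + 1"
  proof -
    have "\<phi> b t = -1" using leaf(2,9) coeff_t by (auto simp: set_eq_iff)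
    then show ?thesis using dot_drop_column[of b b] by simp
  qed
  ultimately show ?thesis
    using \<open>vs \<noteq> []\<close> vs leaf(10) E_sym by (intro Gamma_chain_Cons[OF chain]) auto
qed

end

definition Gamma_chain_with_ends ::
  "'v set \<Rightarrow> ('v \<Rightarrow> 'v \<Rightarrow> bool) \<Rightarrow> nat set \<Rightarrow> ('v \<Rightarrow> nat \<Rightarrow> int) \<Rightarrow> nat \<Rightarrow> bool" where
  "Gamma_chain_with_ends V E I \<phi> t \<longleftrightarrow> (\<exists>vs p q. set vs = V
     \<and> Gamma_chain E (\<lambda>v. dot I (\<phi> v) (\<phi> v)) vs p q \<and> {v\<in>V. \<phi> v t \<noteq> 0} = {hd vs, last vs})"

context type56_embedding
begin

lemma Gamma_chain_with_ends_base:
  assumes "card V < 3"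
  shows "Gamma_chain_with_ends V E I \<phi> t"
proof -
  obtain p where p: "p \<in> V" "\<phi> p s = 1" using unique_one[OF s_in_I t_ne_s[symmetric]] by blast
  have "card {v\<in>V. \<phi> v s = -2} = 1" using card_coeff[of "-2" s] type5_s unfolding type5_def by simp
  then obtain q where q: "q \<in> V" "\<phi> q s = -2"
    by (auto simp: card_1_singleton_iff)
  have "p \<noteq> q" using p q by auto
  have V: "V = {p, q}"
    using card_V_ge_2 assms p(1) q(1) \<open>p \<noteq> q\<close> finite_V by (intro card_seteq[symmetric]) auto
  have off_s: "\<phi> v i = 0 \<or> \<phi> v i = -1" if "v \<in> V" "i \<noteq> s" for v i
    using special_index_unique[of v s i] coeff_values[of v i] that p q V by auto
  have "{v\<in>V. \<phi> v t = -1} = V"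
    using card_minus_one_t assms by (intro card_seteq[OF finite_V]) auto
  then have "p \<in> {v\<in>V. \<phi> v t = -1}" "q \<in> {v\<in>V. \<phi> v t = -1}" using p(1) q(1) by auto
  then have t_col: "\<phi> p t = -1" "\<phi> q t = -1" by auto
  have other: "\<phi> v i = 0" if v: "v \<in> V" and i: "i \<noteq> s" "i \<noteq> t" for v i
  proof (cases "i \<in> I")
    case True
    then obtain u where "u \<in> V" "\<phi> u i = 1" using unique_one[OF _ i(2)] by blast
    then show ?thesis using off_s[of u i] i(1) by auto
  next
    case False
    then show ?thesis using support v by blast
  qed
  have dot_two: "dot I (\<phi> v) (\<phi> z) = \<phi> v s * \<phi> z s + \<phi> v t * \<phi> z t" if "v \<in> V" for v z
    using dot_supported_two[OF finite_I s_in_I t_in_I t_ne_s[symmetric]] other[OF that] by blast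
  have "E p q" using dot_distinct[OF p(1) q(1) \<open>p \<noteq> q\<close>] dot_two[OF p(1), of q] p q t_col
    by (auto split: if_splits)
  then have "Gamma_chain E (\<lambda>v. dot I (\<phi> v) (\<phi> v)) [p, q] 3 2"
    using \<open>p \<noteq> q\<close> E_sym E_irrefl by (intro Gamma_chain_base) (simp_all add: dot_two p q t_col)
  then show ?thesis
    unfolding Gamma_chain_with_ends_def using V t_col by (intro exI[of _ "[p, q]"]) auto
qed

lemma Gamma_chain_with_ends_step:
  assumes "card V \<ge> 3"
    and IH: "\<And>(V' :: 'v set) E' I' \<phi>' t' s'. card V' < card V \<Longrightarrow> type56_embedding V' E' I' \<phi>' t' s' \<Longrightarrow>
      Gamma_chain_with_ends V' E' I' \<phi>' t'"
  shows "Gamma_chain_with_ends V E I \<phi> t"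
proof -
  obtain w x where wx: "w \<in> V" "x \<in> I" "x \<noteq> t" "x \<noteq> s" "\<phi> w x = 1" "\<phi> w t = -1"
    "\<forall>i. i \<noteq> x \<longrightarrow> i \<noteq> t \<longrightarrow> \<phi> w i = 0"
    by (rule exists_leaf_vector[OF assms(1)])
  obtain a b where ab: "a \<in> V" "b \<in> V" "w \<noteq> a" "w \<noteq> b" "a \<noteq> b"
    "{v\<in>V. \<phi> v t \<noteq> 0} = {w, b}" "{v\<in>V. \<phi> v x \<noteq> 0} = {w, a, b}" "\<phi> a x = -1" "\<phi> b x = -1"
    "\<forall>z. E w z \<longleftrightarrow> z = a"
    by (rule leaf_structure[OF wx])
  let ?E = "\<lambda>u v. E u v \<and> u \<noteq> w \<and> v \<noteq> w" and ?\<psi> = "\<lambda>v i. if i = t then 0 else \<phi> v i"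
  have "type56_embedding (V - {w}) ?E (I - {t}) ?\<psi> x s"
    by (rule remove_leaf[OF wx(1) ab(1-5) wx(2-5,7) ab(6-10)])
  then have "Gamma_chain_with_ends (V - {w}) ?E (I - {t}) ?\<psi> x"
    by (rule IH[OF card_Diff1_less[OF finite_V wx(1)]])
  then obtain vs p q where vs: "set vs = V - {w}" "Gamma_chain ?E (\<lambda>v. dot (I - {t}) (?\<psi> v) (?\<psi> v)) vs p q"
      "{v\<in>V - {w}. ?\<psi> v x \<noteq> 0} = {hd vs, last vs}"
    unfolding Gamma_chain_with_ends_def by blast
  have "{v\<in>V - {w}. ?\<psi> v x \<noteq> 0} = {a, b}" using ab(3-7) wx(3) by auto
  then have "{hd vs, last vs} = {a, b}" using vs(3) by simp
  then obtain vs' p' q' where vs': "set vs' = set vs"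
      "Gamma_chain ?E (\<lambda>v. dot (I - {t}) (?\<psi> v) (?\<psi> v)) vs' p' q'" "hd vs' = a" "last vs' = b"
    by (rule Gamma_chain_orient[OF vs(2) _ ab(5)])
  then have "Gamma_chain E (\<lambda>v. dot I (\<phi> v) (\<phi> v)) (w # vs') (2*p' - q') p'"
    using Gamma_chain_attach_leaf[OF wx(1) ab(2,4) wx(2,3,5-7) ab(6,10)] vs(1) by simp
  moreover have "set (w # vs') = V" "{v\<in>V. \<phi> v t \<noteq> 0} = {hd (w # vs'), last (w # vs')}"
    using ab(2,4,6) vs'(1,4) vs(1) wx(1) by auto
  ultimately show ?thesis
    unfolding Gamma_chain_with_ends_def by blast
qed

end

lemma type56_embedding_Gamma_chain_with_ends:
  "type56_embedding V E I \<phi> t s \<Longrightarrow> Gamma_chain_with_ends V E I \<phi> t"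
proof (induction "card V" arbitrary: V E I \<phi> t s rule: less_induct)
  case less
  interpret type56_embedding V E I \<phi> t s by (rule less.prems)
  show ?case
  proof (cases "card V < 3")
    case True
    then show ?thesis by (rule Gamma_chain_with_ends_base)
  next
    case False
    then show ?thesis using less.hyps by (intro Gamma_chain_with_ends_step) auto
  qed
qed

lemma Qn_eq_dot: "Qn n x y = - dot {..<n} x y"
  unfolding Qn_def dot_def by (simp add: lessThan_def)

lemma Qn_Kn: "Qn n x (Kn n) = - (\<Sum>i<n. x i)"
  unfolding Qn_def Kn_def by simp

lemma symplectic_embedding_type56_embedding:
  assumes tree: "is_tree V E" and minimal: "minimal_plumbing V d"
    and emb: "symplectic_embedding n V E d \<phi>"
    and "t < n" "type6 V \<phi> t" "s < n" "type5 V \<phi> s"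
    and "\<And>i. i < n \<Longrightarrow> i \<noteq> t \<Longrightarrow> i \<noteq> s \<Longrightarrow> type4 V \<phi> i \<or> type7 V \<phi> i"
  shows "type56_embedding V E {..<n} \<phi> t s"
proof
  have "graph V E" "connected_graph V E" using tree unfolding is_tree_def by auto
  then show "finite V" "\<And>v w. E v w \<Longrightarrow> v \<in> V \<and> w \<in> V" "\<And>v. \<not> E v v"
    "\<And>v w. v \<in> V \<Longrightarrow> w \<in> V \<Longrightarrow> E\<^sup>*\<^sup>* v w"
    unfolding graph_def connected_graph_def by auto
  show "dot {..<n} (\<phi> v) (\<phi> w) = (if E v w then -1 else 0)" if "v \<in> V" "w \<in> V" "v \<noteq> w" for v w
  proof -
    have "Qn n (\<phi> v) (\<phi> w) = (if E v w then 1 else 0)"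
      using emb that unfolding symplectic_embedding_def by blast
    then show ?thesis by (simp add: Qn_eq_dot split: if_splits)
  qed
  show "(\<Sum>i\<in>{..<n}. \<phi> v i * (\<phi> v i + 1)) = 2" if "v \<in> V" for v
  proof -
    have "Qn n (\<phi> v) (Kn n) + Qn n (\<phi> v) (\<phi> v) = -2"
      using emb that unfolding symplectic_embedding_def by blast
    then have "(\<Sum>i<n. \<phi> v i) + dot {..<n} (\<phi> v) (\<phi> v) = 2"
      using Qn_Kn[of n "\<phi> v"] Qn_eq_dot[of n "\<phi> v" "\<phi> v"] by linarith
    then show ?thesis by (simp add: dot_def algebra_simps sum.distrib)
  qed
  show "dot {..<n} (\<phi> v) (\<phi> v) \<noteq> 1" if "v \<in> V" for v
    using emb minimal that unfolding symplectic_embedding_def minimal_plumbing_def Qn_eq_dot by force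
  show "\<phi> v i = 0" if "v \<in> V" "i \<notin> {..<n}" for v i
    using emb that unfolding symplectic_embedding_def by auto
qed (use assms in auto)

theorem theorem3p12:
  fixes V :: "'v set" and E :: "'v \<Rightarrow> 'v \<Rightarrow> bool" and d :: "'v \<Rightarrow> int"
    and \<phi> :: "'v \<Rightarrow> nat \<Rightarrow> int" and n t :: nat
  assumes tree: "is_tree V E"
    and minimal: "minimal_plumbing V d"
    and card: "card V = n"
    and emb: "symplectic_embedding n V E d \<phi>"
    and t: "t < n" "type6 V \<phi> t"
    and t_unique: "\<forall>i<n. type6 V \<phi> i \<longrightarrow> i = t"
    and five: "\<exists>!s. s < n \<and> type5 V \<phi> s"
    and others: "\<forall>i<n. i \<noteq> t \<and> \<not> type5 V \<phi> i \<longrightarrow> type4 V \<phi> i \<or> type7 V \<phi> i"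
  shows "in_G V E d \<and>
    (\<exists>p q vs. 0 < q \<and> q < p \<and> coprime p q \<and> is_Gamma_pq p q V E d vs
       \<and> {v \<in> V. \<phi> v t \<noteq> 0} = {hd vs, last vs})"
proof -
  obtain s where s: "s < n" "type5 V \<phi> s" "\<And>i. i < n \<Longrightarrow> type5 V \<phi> i \<Longrightarrow> i = s"
    using five by blast
  interpret type56_embedding V E "{..<n}" \<phi> t s
    using symplectic_embedding_type56_embedding[OF tree minimal emb t s(1,2)] others s(3) by blast
  obtain vs p q where vs: "set vs = V" "Gamma_chain E (\<lambda>v. dot {..<n} (\<phi> v) (\<phi> v)) vs p q"
    "{v\<in>V. \<phi> v t \<noteq> 0} = {hd vs, last vs}"
    using type56_embedding_Gamma_chain_with_ends[OF type56_embedding_axioms]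
    unfolding Gamma_chain_with_ends_def by blast
  have "vs \<noteq> []" using vs(1) card_V_ge_2 by auto
  have "is_Gamma_pq p q V E d vs"
    using emb dot_self_ge_2 unfolding symplectic_embedding_def Qn_eq_dot
    by (intro is_Gamma_pq_if_Gamma_chain[OF vs(2,1) \<open>vs \<noteq> []\<close>]) auto
  moreover have "0 < q" "q < p" "coprime p q" using vs(2) unfolding Gamma_chain_def by auto
  ultimately show ?thesis unfolding in_G_def using vs(3) by blast
qed

end
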